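(* Let $f$ be a Lebesgue measurable function on $(0,\infty)$ such that the set $\{x\in(0,\infty):f(x)\neq0\}$ has positive Lebesgue measure. Then $\mathbf J_{\mathscr W_{p',1/v_1}}(f)=\infty$. In particular the strong associate space of $\mathscr W_{p',1/v_1}$ is $\{0\}$.
   Context: Let $1<p<\infty$, $p'=p/(p-1)$. For $1\le r<\infty$, $\mathscr V_r(0,\infty)$ is the set of $v\in L^r_{\rm loc}(0,\infty)$, $v\ge0$, $\|v\|_{L^1(0,\infty)}\ne0$. Let $v_0,v_1\in\mathscr V_p(0,\infty)$ with $1/v_1\in L^{p'}_{\rm loc}(0,\infty)$, and assume there is $c\in(0,\infty)$ with $\|v_1^{-1}\|_{L^{p'}(0,c)}\|v_0\|_{L^p(0,c)}=\|v_1^{-1}\|_{L^{p'}(c,\infty)}\|v_0\|_{L^p(c,\infty)}=\infty$. Then there exist unique strictly increasing absolutely continuous functions $a,b$ on $(0,\infty)$ with $a(t),b(t)\to0$ as $t\to0$, $a(t),b(t)\to\infty$ as $t\to\infty$, $a(t)<t<b(t)$, $\int_{a(t)}^t v_1^{-p'}=\int_t^{b(t)}v_1^{-p'}$ and $\bigl(\int_{a(t)}^{b(t)}v_1^{-p'}\bigr)^{1/p'}\bigl(\int_{a(t)}^{b(t)}v_0^{p}\bigr)^{1/p}=1$ for all $t>0$; $a^{-1}$ is the inverse of $a$, $V_1(t):=\int_{a(t)}^{b(t)}v_1^{-p'}$. For $g\in L^1_{\rm loc}(0,\infty)$: $\mathbb G(g)=\Bigl(\int_0^\infty v_1^{-p'}(t)\Bigl|\int_t^{a^{-1}(t)}\frac{g(x)}{V_1(x)}\bigl(\int_{a(x)}^t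 v_1^{-p'}\bigr)dx\Bigr|^{p'}dt\Bigr)^{1/p'}$, $\mathcal G(g)=\Bigl(\int_0^\infty v_1^{-p'}(t)V_1^{p'}(t)\Bigl|\int_t^{a^{-1}(t)}\frac{g(x)}{V_1(x)}dx\Bigr|^{p'}dt\Bigr)^{1/p'}$; $\mathscr W_{p',1/v_1}=\{g\in L^1_{\rm loc}(0,\infty):\|g\|_{\mathscr W_{p',1/v_1}}:=\mathbb G(g)+\mathcal G(g)<\infty\}$. For measurable $f$, $\mathbf J_{\mathscr W_{p',1/v_1}}(f):=\sup_{0\ne g\in\mathscr W_{p',1/v_1}}\frac{\int_0^\infty|fg|}{\|g\|_{\mathscr W_{p',1/v_1}}}\in[0,\infty]$, and the strong associate space is $\{f:\mathbf J_{\mathscr W_{p',1/v_1}}(f)<\infty\}$. *)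

theory Defs
  imports "HOL-Analysis.Analysis"
begin

definition conj_exp :: "real \<Rightarrow> real" where
  "conj_exp p = p / (p - 1)"

definition epow :: "ennreal \<Rightarrow> real \<Rightarrow> ennreal" where
  "epow I s = (if I = \<infinity> then \<infinity> else ennreal (enn2real I powr s))"

definition Lnorm :: "real \<Rightarrow> real set \<Rightarrow> (real \<Rightarrow> real) \<Rightarrow> ennreal" where
  "Lnorm r A v = epow (\<integral>\<^sup>+ x\<in>A. ennreal (\<bar>v x\<bar> powr r) \<partial>lebesgue) (1 / r)"

definition Lloc :: "real \<Rightarrow> (real \<Rightarrow> real) \<Rightarrow> bool" where
  "Lloc r v \<longleftrightarrow> v \<in> borel_measurable (lebesgue_on {0<..}) \<and>
     (\<forall>\<alpha> \<beta>. 0 < \<alpha> \<longrightarrow> \<alpha> \<le> \<beta> \<longrightarrow>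
        (\<integral>\<^sup>+ x\<in>{\<alpha>..\<beta>}. ennreal (\<bar>v x\<bar> powr r) \<partial>lebesgue) < \<infinity>)"

definition weight_class :: "real \<Rightarrow> (real \<Rightarrow> real) \<Rightarrow> bool" where
  "weight_class r v \<longleftrightarrow> Lloc r v \<and> (\<forall>x>0. 0 \<le> v x) \<and>
     (\<integral>\<^sup>+ x\<in>{0<..}. ennreal \<bar>v x\<bar> \<partial>lebesgue) \<noteq> 0"

definition loc_abs_cont_pos :: "(real \<Rightarrow> real) \<Rightarrow> bool" where
  "loc_abs_cont_pos f \<longleftrightarrow>
    (\<forall>\<alpha> \<beta>. 0 < \<alpha> \<longrightarrow> \<alpha> \<le> \<beta> \<longrightarrow>
      (\<forall>\<epsilon>>0. \<exists>\<delta>>0. \<forall>(n::nat) (c::nat \<Rightarrow> real) d.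
         (\<forall>i<n. \<alpha> \<le> c i \<and> c i \<le> d i \<and> d i \<le> \<beta>) \<and>
         (\<forall>i<n. \<forall>j<n. i \<noteq> j \<longrightarrow> d i \<le> c j \<or> d j \<le> c i) \<and>
         (\<Sum>i<n. d i - c i) < \<delta> \<longrightarrow>
         (\<Sum>i<n. \<bar>f (d i) - f (c i)\<bar>) < \<epsilon>))"

definition wt :: "real \<Rightarrow> (real \<Rightarrow> real) \<Rightarrow> real \<Rightarrow> real" where
  "wt p v1 x = (1 / v1 x) powr conj_exp p"

definition V1 :: "real \<Rightarrow> (real \<Rightarrow> real) \<Rightarrow> (real \<Rightarrow> real) \<Rightarrow> (real \<Rightarrow> real) \<Rightarrow> real \<Rightarrow> real" where
  "V1 p v1 a b t = (LINT x:{a t..b t}|lebesgue. wt p v1 x)"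

definition GG :: "real \<Rightarrow> (real \<Rightarrow> real) \<Rightarrow> (real \<Rightarrow> real) \<Rightarrow> (real \<Rightarrow> real)
                  \<Rightarrow> (real \<Rightarrow> real) \<Rightarrow> ennreal" where
  "GG p v1 a b g = epow
     (\<integral>\<^sup>+ t\<in>{0<..}. ennreal (wt p v1 t *
        \<bar>LINT x:{t..inv_into {0<..} a t}|lebesgue.
            g x / V1 p v1 a b x * (LINT y:{a x..t}|lebesgue. wt p v1 y)\<bar> powr conj_exp p)
      \<partial>lebesgue) (1 / conj_exp p)"

definition CG :: "real \<Rightarrow> (real \<Rightarrow> real) \<Rightarrow> (real \<Rightarrow> real) \<Rightarrow> (real \<Rightarrow> real)
                  \<Rightarrow> (real \<Rightarrow> real) \<Rightarrow> ennreal" where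
  "CG p v1 a b g = epow
     (\<integral>\<^sup>+ t\<in>{0<..}. ennreal (wt p v1 t * V1 p v1 a b t powr conj_exp p *
        \<bar>LINT x:{t..inv_into {0<..} a t}|lebesgue. g x / V1 p v1 a b x\<bar> powr conj_exp p)
      \<partial>lebesgue) (1 / conj_exp p)"

definition Wnorm :: "real \<Rightarrow> (real \<Rightarrow> real) \<Rightarrow> (real \<Rightarrow> real) \<Rightarrow> (real \<Rightarrow> real)
                  \<Rightarrow> (real \<Rightarrow> real) \<Rightarrow> ennreal" where
  "Wnorm p v1 a b g = GG p v1 a b g + CG p v1 a b g"

definition Wspace :: "real \<Rightarrow> (real \<Rightarrow> real) \<Rightarrow> (real \<Rightarrow> real) \<Rightarrow> (real \<Rightarrow> real)
                  \<Rightarrow> (real \<Rightarrow> real) set" where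
  "Wspace p v1 a b = {g. Lloc 1 g \<and> Wnorm p v1 a b g < \<infinity>}"

definition JW :: "real \<Rightarrow> (real \<Rightarrow> real) \<Rightarrow> (real \<Rightarrow> real) \<Rightarrow> (real \<Rightarrow> real)
                  \<Rightarrow> (real \<Rightarrow> real) \<Rightarrow> ennreal" where
  "JW p v1 a b f = (SUP g \<in> {g \<in> Wspace p v1 a b. \<not> (AE x in lebesgue_on {0<..}. g x = 0)}.
      (\<integral>\<^sup>+ x\<in>{0<..}. ennreal \<bar>f x * g x\<bar> \<partial>lebesgue) / Wnorm p v1 a b g)"

definition strong_assoc :: "real \<Rightarrow> (real \<Rightarrow> real) \<Rightarrow> (real \<Rightarrow> real) \<Rightarrow> (real \<Rightarrow> real)
                  \<Rightarrow> (real \<Rightarrow> real) set" where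
  "strong_assoc p v1 a b = {f \<in> borel_measurable (lebesgue_on {0<..}). JW p v1 a b f < \<infinity>}"

end

theory Submission
  imports Defs
begin

(* Test functions of the form g = H * V1 make the W-norm tractable: g / V1 = H, so the inner
   integrals of both GG and CG are integrals of H against 1 and against
   int_{a x}^t v1^(-p') = Omega t - Omega (a x), Omega being a primitive of v1^(-p').
   If H is supported in [alpha, beta] and annihilates both 1 and Omega o a, these inner integrals
   vanish for t outside crit = [a alpha, a beta] Un [alpha, beta] and are bounded on crit, so
   ||g|| <= 2 Wtot ||H||_1 (int_crit v1^(-p'))^(1/p').  Such H exist on every set of positive
   measure (three disjoint pieces, two linear conditions).  Taking [alpha, beta] short inside a
   window where |f| >= delta on a set of positive measure makes int_crit v1^(-p') arbitrarily
   small, while int |f g| >= delta (min V1) ||H||_1; hence the quotients defining J(f) are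
   unbounded. *)

lemma continuous_on_loc_abs_cont_pos:
  assumes "loc_abs_cont_pos f"
  shows "continuous_on {0<..} f"
proof (intro continuous_at_imp_continuous_on ballI)
  fix x :: real assume "x \<in> {0<..}"
  then have x: "0 < x" by simp
  show "isCont f x"
  proof (rule continuous_at_eps_delta[THEN iffD2], intro allI impI)
    fix e :: real assume "0 < e"
    moreover have "0 < x/2" "x/2 \<le> 2*x" using x by auto
    ultimately obtain d where d: "0 < d" and small: "\<And>(n::nat) c dd.
        (\<forall>i<n. x/2 \<le> c i \<and> c i \<le> dd i \<and> dd i \<le> 2*x) \<and>
        (\<forall>i<n. \<forall>j<n. i \<noteq> j \<longrightarrow> dd i \<le> c j \<or> dd j \<le> c i) \<and>
        (\<Sum>i<n. dd i - c i) < d \<Longrightarrow> (\<Sum>i<n. \<bar>f (dd i) - f (c i)\<bar>) < e"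
      using assms unfolding loc_abs_cont_pos_def by blast
    show "\<exists>d>0. \<forall>y. dist y x < d \<longrightarrow> dist (f y) (f x) < e"
    proof (intro exI[of _ "min d (x/2)"] conjI allI impI)
      show "0 < min d (x/2)" using d x by simp
      fix y assume "dist y x < min d (x/2)"
      then have "(\<Sum>i<Suc 0. \<bar>f ((\<lambda>_. max x y) i) - f ((\<lambda>_. min x y) i)\<bar>) < e"
        using x by (intro small) (auto simp: dist_real_def abs_if split: if_splits)
      then show "dist (f y) (f x) < e"
        by (auto simp: dist_real_def max_def min_def abs_minus_commute split: if_splits)
    qed
  qed
qed

lemma Lloc_powr_absolutely_integrable_on:
  assumes "Lloc r v" "\<And>x. 0 < x \<Longrightarrow> 0 \<le> v x" "0 < u"
  shows "(\<lambda>x. v x powr r) absolutely_integrable_on {u..u'}"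
proof -
  have [measurable]: "v \<in> borel_measurable (lebesgue_on {0<..})"
    using assms(1) unfolding Lloc_def by simp
  have "(\<lambda>x. v x powr r) \<in> borel_measurable (lebesgue_on {0<..})"
    by measurable
  then have "(\<lambda>x. indicator {0<..} x * v x powr r) \<in> borel_measurable lebesgue"
    by (subst (asm) borel_measurable_restrict_space_iff) auto
  then have "(\<lambda>x. indicator {u..u'} x * (indicator {0<..} x * v x powr r))
      \<in> borel_measurable lebesgue"
    by (rule borel_measurable_times[OF borel_measurable_indicator, rotated]) simp
  also have "(\<lambda>x. indicator {u..u'} x * (indicator {0<..} x * v x powr r)) =
      (\<lambda>x. indicator {u..u'} x * v x powr r)"
    using assms(3) by (auto simp: indicator_def fun_eq_iff)
  finally have meas: "(\<lambda>x. indicator {u..u'} x * v x powr r) \<in> borel_measurable lebesgue" .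
  have "(\<integral>\<^sup>+ x\<in>{u..u'}. ennreal (\<bar>v x\<bar> powr r) \<partial>lebesgue) < \<infinity>"
    using assms(1,3) unfolding Lloc_def by (cases "u \<le> u'") auto
  also have "(\<integral>\<^sup>+ x\<in>{u..u'}. ennreal (\<bar>v x\<bar> powr r) \<partial>lebesgue)
      = (\<integral>\<^sup>+ x. ennreal (norm (indicator {u..u'} x * v x powr r)) \<partial>lebesgue)"
    using assms(2,3) by (intro nn_integral_cong) (auto simp: indicator_def)
  finally have "integrable lebesgue (\<lambda>x. indicator {u..u'} x * v x powr r)"
    by (intro integrableI_bounded meas)
  then show ?thesis
    unfolding set_integrable_def by simp
qed

lemma level_set_in_sets_lebesgue:
  fixes f :: "real \<Rightarrow> real"
  assumes "f \<in> borel_measurable (lebesgue_on {0<..})" "0 < \<alpha>"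
  shows "{x\<in>{\<alpha>..\<beta>}. \<delta> \<le> \<bar>f x\<bar>} \<in> sets lebesgue"
proof -
  have "{x \<in> space (lebesgue_on {0<..}). \<delta> \<le> \<bar>f x\<bar>} \<in> sets (lebesgue_on {0<..})"
    using assms(1) by measurable
  then have "{x \<in> {0<..}. \<delta> \<le> \<bar>f x\<bar>} \<in> sets lebesgue"
    by (simp add: sets_restrict_space_iff)
  then have "{x \<in> {0<..}. \<delta> \<le> \<bar>f x\<bar>} \<inter> {\<alpha>..\<beta>} \<in> sets lebesgue"
    by (rule sets.Int) simp
  also have "{x \<in> {0<..}. \<delta> \<le> \<bar>f x\<bar>} \<inter> {\<alpha>..\<beta>} = {x\<in>{\<alpha>..\<beta>}. \<delta> \<le> \<bar>f x\<bar>}"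
    using assms(2) by auto
  finally show ?thesis .
qed

lemma exists_level_set_pos_measure:
  fixes f :: "real \<Rightarrow> real"
  assumes f: "f \<in> borel_measurable (lebesgue_on {0<..})"
    and nz: "0 < emeasure lebesgue {x \<in> {0<..}. f x \<noteq> 0}"
  obtains \<alpha> \<beta> \<delta> where "0 < \<alpha>" "0 < \<delta>" "0 < emeasure lebesgue {x\<in>{\<alpha>..\<beta>}. \<delta> \<le> \<bar>f x\<bar>}"
proof (rule ccontr)
  assume "\<not> thesis"
  define N where "N n = {x\<in>{1 / Suc n..Suc n}. 1 / Suc n \<le> \<bar>f x\<bar>}" for n :: nat
  have "N n \<in> null_sets lebesgue" for n
  proof (rule null_setsI)
    have "0 < 1 / real (Suc n)" by simp
    then have "\<not> 0 < emeasure lebesgue (N n)"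
      using \<open>\<not> thesis\<close> that unfolding N_def by blast
    then show "emeasure lebesgue (N n) = 0"
      by (rule not_gr_zero[THEN iffD1])
    show "N n \<in> sets lebesgue"
      unfolding N_def by (rule level_set_in_sets_lebesgue[OF f]) simp
  qed
  then have "\<Union>(range N) \<in> null_sets lebesgue"
    by (intro null_sets_UN)
  moreover have "{x \<in> {0<..}. f x \<noteq> 0} \<subseteq> \<Union>(range N)"
  proof
    fix x assume "x \<in> {x \<in> {0<..}. f x \<noteq> 0}"
    then have x: "0 < x" "0 < \<bar>f x\<bar>" by auto
    obtain n :: nat where "max x (max (1/x) (1/\<bar>f x\<bar>)) \<le> n"
      using real_arch_simple by blast
    then have "x \<le> n" "1/x \<le> n" "1/\<bar>f x\<bar> \<le> n"
      by linarith+
    then have "x \<le> Suc n" "1 / Suc n \<le> x" "1 / Suc n \<le> \<bar>f x\<bar>"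
      using x by (auto simp: divide_le_eq mult.commute intro: order.trans[OF _ mult_left_mono])
    then have "x \<in> N n" by (simp add: N_def)
    then show "x \<in> \<Union>(range N)" by blast
  qed
  ultimately have "emeasure lebesgue {x \<in> {0<..}. f x \<noteq> 0} \<le> 0"
    by (metis emeasure_mono null_setsD1 null_setsD2)
  then show False using nz by simp
qed

lemma exists_short_subinterval_pos_measure:
  fixes F :: "real set"
  assumes F: "F \<in> sets lebesgue" "F \<subseteq> {\<alpha>0..\<beta>0}" "0 < emeasure lebesgue F" and "0 < \<eta>"
  obtains \<alpha> \<beta> where "\<alpha>0 \<le> \<alpha>" "\<alpha> \<le> \<beta>" "\<beta> \<le> \<beta>0" "\<beta> - \<alpha> < \<eta>"
    "0 < emeasure lebesgue (F \<inter> {\<alpha>..\<beta>})"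
proof -
  have "F \<noteq> {}" using F(3) by auto
  then have "\<alpha>0 \<le> \<beta>0" using F(2) by auto
  define d where "d = \<eta> / 2"
  have d: "0 < d" "d < \<eta>" using \<open>0 < \<eta>\<close> by (auto simp: d_def)
  define l where "l k = min \<beta>0 (\<alpha>0 + real k * d)" for k
  have cover: "F \<subseteq> (\<Union>k. F \<inter> {l k..l (Suc k)})"
  proof
    fix x assume "x \<in> F"
    then have x: "\<alpha>0 \<le> x" "x \<le> \<beta>0" using F(2) by auto
    define k where "k = nat \<lfloor>(x - \<alpha>0) / d\<rfloor>"
    have "real k = \<lfloor>(x - \<alpha>0) / d\<rfloor>" using x d by (simp add: k_def)
    then have "real k \<le> (x - \<alpha>0) / d" "(x - \<alpha>0) / d \<le> real (Suc k)"
      by linarith+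
    then have "\<alpha>0 + real k * d \<le> x" "x \<le> \<alpha>0 + real (Suc k) * d"
      using d by (simp_all add: field_simps)
    then have "x \<in> {l k..l (Suc k)}"
      using x by (simp add: l_def)
    then show "x \<in> (\<Union>k. F \<inter> {l k..l (Suc k)})" using \<open>x \<in> F\<close> by blast
  qed
  have "\<exists>k. F \<inter> {l k..l (Suc k)} \<notin> null_sets lebesgue"
  proof (rule ccontr)
    assume "\<nexists>k. F \<inter> {l k..l (Suc k)} \<notin> null_sets lebesgue"
    then have "(\<Union>k. F \<inter> {l k..l (Suc k)}) \<in> null_sets lebesgue"
      by (intro null_sets_UN) auto
    then have "F \<in> null_sets lebesgue"
      by (rule null_sets_subset[OF _ F(1) cover])
    then show False using F(3) by auto
  qed
  then obtain k where "F \<inter> {l k..l (Suc k)} \<notin> null_sets lebesgue" ..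
  moreover have "F \<inter> {l k..l (Suc k)} \<in> sets lebesgue"
    by (rule sets.Int[OF F(1)]) simp
  ultimately have "0 < emeasure lebesgue (F \<inter> {l k..l (Suc k)})"
    by (metis null_setsI not_gr_zero)
  moreover have "\<alpha>0 \<le> l k" "l k \<le> l (Suc k)" "l (Suc k) \<le> \<beta>0" "l (Suc k) - l k < \<eta>"
    using d \<open>\<alpha>0 \<le> \<beta>0\<close> by (auto simp: l_def min_def algebra_simps)
  ultimately show thesis by (rule that[rotated 4])
qed

lemma measure_Int_atMost_mono_lipschitz:
  fixes E :: "real set"
  assumes "E \<in> fmeasurable lebesgue" "s \<le> s'"
  shows "measure lebesgue (E \<inter> {..s}) \<le> measure lebesgue (E \<inter> {..s'})"
    and "measure lebesgue (E \<inter> {..s'}) \<le> measure lebesgue (E \<inter> {..s}) + (s' - s)"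
proof -
  have fm: "E \<inter> {..t} \<in> fmeasurable lebesgue" for t
    using assms(1) by (rule fmeasurable_Int_fmeasurable) simp
  show "measure lebesgue (E \<inter> {..s}) \<le> measure lebesgue (E \<inter> {..s'})"
    using assms(2) by (intro measure_mono_fmeasurable[OF _ fmeasurableD[OF fm] fm]) auto
  have "measure lebesgue (E \<inter> {..s'}) \<le> measure lebesgue ((E \<inter> {..s}) \<union> {s..s'})"
    by (intro measure_mono_fmeasurable fmeasurable.Un fm fmeasurableD[OF fm])
      (auto intro: bounded_set_imp_lmeasurable)
  also have "\<dots> \<le> measure lebesgue (E \<inter> {..s}) + measure lebesgue {s..s'}"
    by (intro measure_Un_le) (auto intro: fmeasurableD[OF fm])
  finally show "measure lebesgue (E \<inter> {..s'}) \<le> measure lebesgue (E \<inter> {..s}) + (s' - s)"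
    using assms(2) by simp
qed

lemma continuous_on_measure_Int_atMost:
  fixes E :: "real set"
  assumes "E \<in> fmeasurable lebesgue"
  shows "continuous_on S (\<lambda>s. measure lebesgue (E \<inter> {..s}))"
  unfolding continuous_on_iff
proof (intro ballI allI impI)
  fix x e :: real assume "0 < e"
  have "\<bar>measure lebesgue (E \<inter> {..y}) - measure lebesgue (E \<inter> {..x})\<bar> \<le> \<bar>y - x\<bar>" for y
    using measure_Int_atMost_mono_lipschitz[OF assms, of x y]
      measure_Int_atMost_mono_lipschitz[OF assms, of y x]
    by (cases "x \<le> y") auto
  then show "\<exists>d>0. \<forall>y\<in>S. dist y x < d \<longrightarrow>
      dist (measure lebesgue (E \<inter> {..y})) (measure lebesgue (E \<inter> {..x})) < e"
    using \<open>0 < e\<close> by (intro exI[of _ e]) (auto simp: dist_real_def intro: le_less_trans)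
qed

lemma exists_measure_Int_atMost_eq:
  fixes E :: "real set"
  assumes "E \<in> sets lebesgue" "E \<subseteq> {\<alpha>..\<beta>}" "0 \<le> \<theta>" "\<theta> \<le> measure lebesgue E"
  shows "\<exists>s. measure lebesgue (E \<inter> {..s}) = \<theta>"
proof (cases "\<alpha> \<le> \<beta>")
  case True
  have Ef: "E \<in> fmeasurable lebesgue"
    using assms(1,2) by (intro fmeasurableI2[OF bounded_set_imp_lmeasurable[of "{\<alpha>..\<beta>}"]]) auto
  have "E \<inter> {..\<alpha>} \<subseteq> {\<alpha>..\<alpha>}" using assms(2) by auto
  then have "measure lebesgue (E \<inter> {..\<alpha>}) \<le> measure lebesgue {\<alpha>..\<alpha>}"
    using assms(1) by (intro measure_mono_fmeasurable[OF _ _ bounded_set_imp_lmeasurable]) auto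
  then have "measure lebesgue (E \<inter> {..\<alpha>}) = 0" by (simp add: antisym measure_nonneg)
  moreover have "measure lebesgue (E \<inter> {..\<beta>}) = measure lebesgue E"
    using assms(2) by (simp add: Int_absorb2 subset_eq)
  ultimately show ?thesis
    using IVT'[of "\<lambda>s. measure lebesgue (E \<inter> {..s})" \<alpha> \<theta> \<beta>] True assms(3,4)
      continuous_on_measure_Int_atMost[OF Ef] by force
next
  case False
  then have "E = {}" using assms(2) by auto
  then show ?thesis using assms(3,4) by simp
qed

lemma split_three_pos_measure:
  fixes E :: "real set"
  assumes E: "E \<in> sets lebesgue" "E \<subseteq> {\<alpha>..\<beta>}" "0 < emeasure lebesgue E"
  obtains E1 E2 E3 where "E1 \<in> sets lebesgue" "E2 \<in> sets lebesgue" "E3 \<in> sets lebesgue"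
    "E1 \<subseteq> E" "E2 \<subseteq> E" "E3 \<subseteq> E" "E1 \<inter> E2 = {}" "E1 \<inter> E3 = {}" "E2 \<inter> E3 = {}"
    "0 < measure lebesgue E1" "0 < measure lebesgue E2" "0 < measure lebesgue E3"
proof -
  have Ef: "E \<in> fmeasurable lebesgue"
    using E(1,2) by (intro fmeasurableI2[OF bounded_set_imp_lmeasurable[of "{\<alpha>..\<beta>}"]]) auto
  define m where "m = measure lebesgue E"
  have m: "0 < m" using E(3) Ef by (simp add: m_def emeasure_eq_measure2)
  define \<phi> where "\<phi> s = measure lebesgue (E \<inter> {..s})" for s
  obtain s1 s2 where s: "\<phi> s1 = m/3" "\<phi> s2 = 2*m/3"
    using exists_measure_Int_atMost_eq[OF E(1,2), of "m/3"]
      exists_measure_Int_atMost_eq[OF E(1,2), of "2*m/3"] m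
    unfolding \<phi>_def m_def by auto
  have "s1 \<le> s2"
  proof (rule ccontr)
    assume "\<not> s1 \<le> s2"
    then have "\<phi> s2 \<le> \<phi> s1"
      unfolding \<phi>_def by (intro measure_Int_atMost_mono_lipschitz(1)[OF Ef]) simp
    then show False using s m by simp
  qed
  define E1 E2 E3 where "E1 = E \<inter> {..s1}" and "E2 = E \<inter> {s1<..s2}" and "E3 = E \<inter> {s2<..}"
  have sets: "E1 \<in> sets lebesgue" "E2 \<in> sets lebesgue" "E3 \<in> sets lebesgue"
    using E(1) by (auto simp: E1_def E2_def E3_def)
  have "E \<inter> {..s2} = E1 \<union> E2"
    using \<open>s1 \<le> s2\<close> by (auto simp: E1_def E2_def)
  then have "\<phi> s2 \<le> measure lebesgue E1 + measure lebesgue E2"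
    unfolding \<phi>_def using measure_Un_le[OF sets(1,2)] by simp
  moreover have "m \<le> \<phi> s2 + measure lebesgue E3"
  proof -
    have "m = measure lebesgue ((E \<inter> {..s2}) \<union> E3)"
      unfolding m_def by (rule arg_cong[where f = "measure lebesgue"]) (auto simp: E3_def)
    moreover have "E \<inter> {..s2} \<in> sets lebesgue" by (rule sets.Int[OF E(1)]) simp
    ultimately show ?thesis
      unfolding \<phi>_def using measure_Un_le[of "E \<inter> {..s2}" lebesgue E3] sets(3) by simp
  qed
  moreover have "measure lebesgue E1 = m/3" using s by (simp add: E1_def \<phi>_def)
  ultimately have "0 < measure lebesgue E1" "0 < measure lebesgue E2" "0 < measure lebesgue E3"
    using s m by linarith+
  moreover have "E1 \<inter> E2 = {}" "E1 \<inter> E3 = {}" "E2 \<inter> E3 = {}" "E1 \<subseteq> E" "E2 \<subseteq> E" "E3 \<subseteq> E"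
    using \<open>s1 \<le> s2\<close> by (auto simp: E1_def E2_def E3_def)
  ultimately show thesis
    using sets by (intro that[of E1 E2 E3])
qed

lemma not_AE_eq_0_if_const_on:
  assumes "D \<in> sets M" "0 < measure M D" "c \<noteq> 0" "\<And>x. x \<in> D \<Longrightarrow> H x = c"
  shows "\<not> (AE x in M. H x = 0)"
proof
  assume "AE x in M. H x = 0"
  then have "AE x in M. x \<notin> D" using assms(3,4) by auto
  then have "D \<in> null_sets M" using AE_iff_null_sets[OF assms(1)] by simp
  then show False using assms(2) by (simp add: measure_def null_setsD1)
qed

lemma integrable_indicator_subset_Icc:
  assumes "D \<in> sets lebesgue" "D \<subseteq> {\<alpha>..\<beta>}"
  shows "integrable lebesgue (indicator D :: real \<Rightarrow> real)"
proof -
  have "D \<in> fmeasurable lebesgue"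
    using assms by (intro fmeasurableI2[OF bounded_set_imp_lmeasurable[of "{\<alpha>..\<beta>}"]]) auto
  then show ?thesis
    by (intro integrable_real_indicator) (auto simp: fmeasurable_def)
qed

lemma homogeneous_2x3_nontrivial_solution:
  fixes m1 m2 m3 n1 n2 n3 :: real
  assumes "m1 \<noteq> 0"
  obtains c1 c2 c3 where "c1 \<noteq> 0 \<or> c2 \<noteq> 0 \<or> c3 \<noteq> 0"
    "c1 * m1 + c2 * m2 + c3 * m3 = 0" "c1 * n1 + c2 * n2 + c3 * n3 = 0"
proof (cases "m2*n3 - m3*n2 = 0 \<and> m3*n1 - m1*n3 = 0 \<and> m1*n2 - m2*n1 = 0")
  case True
  then show thesis using assms
    by (intro that[of m2 "-m1" 0]) (auto simp: algebra_simps)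
next
  case False
  then show thesis
    by (intro that[of "m2*n3 - m3*n2" "m3*n1 - m1*n3" "m1*n2 - m2*n1"]) (auto simp: algebra_simps)
qed

lemma exists_annihilating_step_function:
  fixes \<phi> :: "real \<Rightarrow> real"
  assumes E: "E \<in> sets lebesgue" "E \<subseteq> {\<alpha>..\<beta>}" "0 < emeasure lebesgue E"
    and \<phi>: "set_integrable lebesgue E \<phi>"
  obtains H where "integrable lebesgue H" "integrable lebesgue (\<lambda>x. H x * \<phi> x)"
    "\<And>x. H x \<noteq> 0 \<Longrightarrow> x \<in> E" "\<not> (AE x in lebesgue. H x = 0)"
    "(LINT x|lebesgue. H x) = 0" "(LINT x|lebesgue. H x * \<phi> x) = 0"
proof -
  obtain E1 E2 E3 where sets: "E1 \<in> sets lebesgue" "E2 \<in> sets lebesgue" "E3 \<in> sets lebesgue"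
    and sub: "E1 \<subseteq> E" "E2 \<subseteq> E" "E3 \<subseteq> E"
    and disj: "E1 \<inter> E2 = {}" "E1 \<inter> E3 = {}" "E2 \<inter> E3 = {}"
    and pos: "0 < measure lebesgue E1" "0 < measure lebesgue E2" "0 < measure lebesgue E3"
    by (rule split_three_pos_measure[OF E])
  have ind: "integrable lebesgue (indicator D :: real \<Rightarrow> real)" if "D \<in> sets lebesgue" "D \<subseteq> E" for D
    using that E(2) by (intro integrable_indicator_subset_Icc[of D \<alpha> \<beta>]) auto
  have ind_\<phi>: "integrable lebesgue (\<lambda>x. indicator D x * \<phi> x)" if "D \<in> sets lebesgue" "D \<subseteq> E" for D
    using set_integrable_subset[OF \<phi> that] unfolding set_integrable_def by simp
  have "measure lebesgue E1 \<noteq> 0" using pos(1) by simp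
  then obtain c1 c2 c3 where c: "c1 \<noteq> 0 \<or> c2 \<noteq> 0 \<or> c3 \<noteq> 0"
    and mean: "c1 * measure lebesgue E1 + c2 * measure lebesgue E2 + c3 * measure lebesgue E3 = 0"
    and moment: "c1 * (LINT x|lebesgue. indicator E1 x * \<phi> x)
      + c2 * (LINT x|lebesgue. indicator E2 x * \<phi> x)
      + c3 * (LINT x|lebesgue. indicator E3 x * \<phi> x) = 0"
    by (rule homogeneous_2x3_nontrivial_solution)
  define H where "H x = c1 * indicator E1 x + c2 * indicator E2 x + c3 * indicator E3 x"
    for x :: real
  have H\<phi>: "H x * \<phi> x = c1 * (indicator E1 x * \<phi> x) + c2 * (indicator E2 x * \<phi> x)
      + c3 * (indicator E3 x * \<phi> x)" for x
    by (simp add: H_def algebra_simps)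
  show thesis
  proof (rule that)
    show "integrable lebesgue H"
      unfolding H_def using ind sets sub by auto
    show "integrable lebesgue (\<lambda>x. H x * \<phi> x)"
      unfolding H\<phi> using ind_\<phi> sets sub by auto
    show "x \<in> E" if "H x \<noteq> 0" for x
    proof (rule ccontr)
      assume "x \<notin> E"
      then have "H x = 0" using sub by (auto simp: H_def indicator_def)
      then show False using that by simp
    qed
    show "(LINT x|lebesgue. H x) = 0"
      unfolding H_def using ind sets sub mean by (simp add: Bochner_Integration.integral_indicator)
    show "(LINT x|lebesgue. H x * \<phi> x) = 0"
      unfolding H\<phi> using ind_\<phi> sets sub moment by simp
    have H_on: "x \<in> E1 \<Longrightarrow> H x = c1" "x \<in> E2 \<Longrightarrow> H x = c2" "x \<in> E3 \<Longrightarrow> H x = c3" for x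
      using disj by (auto simp: H_def indicator_def)
    from c consider "c1 \<noteq> 0" | "c2 \<noteq> 0" | "c3 \<noteq> 0" by blast
    then show "\<not> (AE x in lebesgue. H x = 0)"
    proof cases
      case 1
      then show ?thesis by (rule not_AE_eq_0_if_const_on[OF sets(1) pos(1) _ H_on(1)])
    next
      case 2
      then show ?thesis by (rule not_AE_eq_0_if_const_on[OF sets(2) pos(2) _ H_on(2)])
    next
      case 3
      then show ?thesis by (rule not_AE_eq_0_if_const_on[OF sets(3) pos(3) _ H_on(3)])
    qed
  qed
qed

lemma epow_le_ennreal_powr:
  assumes "I \<le> ennreal X" "0 \<le> X" "0 < s"
  shows "epow I s \<le> ennreal (X powr s)"
proof -
  have "I < top" using assms(1) ennreal_less_top by (rule le_less_trans)
  then have "I \<noteq> \<infinity>" by simp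
  then have "I = ennreal (enn2real I)" by (simp add: ennreal_enn2real_if)
  then have "enn2real I \<le> X" using assms(1,2) by (metis ennreal_le_iff)
  then have "enn2real I powr s \<le> X powr s" using assms(3) by (intro powr_mono2) auto
  then show ?thesis using \<open>I \<noteq> \<infinity>\<close> unfolding epow_def by simp
qed

lemma ennreal_le_divide:
  fixes X Y :: ennreal
  assumes "ennreal x \<le> X" "0 < x" "Y \<le> ennreal y" "0 < y"
  shows "ennreal (x / y) \<le> X / Y"
proof (cases "Y = 0")
  case True
  have "X \<noteq> 0" using assms(1,2) by (metis ennreal_eq_0_iff le_zero_eq linorder_not_le)
  then show ?thesis using True by simp
next
  case False
  have "Y < top" using assms(3) ennreal_less_top by (rule le_less_trans)
  then obtain y' where y': "Y = ennreal y'" "0 \<le> y'" by (cases Y) auto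
  then have "0 < y'" using False by (metis ennreal_0 order_le_less)
  have "y' \<le> y" using assms(3,4) y' by (simp add: ennreal_le_iff)
  then have "ennreal (x / y) \<le> ennreal (x / y')"
    using \<open>0 < y'\<close> assms(2) by (intro ennreal_leI divide_left_mono) auto
  also have "\<dots> = ennreal x / Y" using assms(2) y' \<open>0 < y'\<close> by (simp add: divide_ennreal)
  also have "\<dots> \<le> X / Y" using assms(1) by (rule divide_right_mono_ennreal)
  finally show ?thesis .
qed

lemma JW_eq_0_if_AE_zero:
  assumes "AE x in lebesgue_on {0<..}. h x = 0"
  shows "JW p v1 a b h = 0"
proof -
  have "AE x in lebesgue. x \<in> {0<..} \<longrightarrow> h x = 0"
    using assms by (subst (asm) AE_restrict_space_iff) auto
  then have "(\<integral>\<^sup>+ x\<in>{0<..}. ennreal \<bar>h x * g x\<bar> \<partial>lebesgue) = 0" for g :: "real \<Rightarrow> real"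
    by (subst nn_integral_cong_AE[where v = "\<lambda>x. 0"]) (auto simp: indicator_def elim!: AE_mp)
  then show ?thesis unfolding JW_def by (simp add: SUP_constant bot_ennreal)
qed

lemma emeasure_nonzero_pos_if_not_AE_zero:
  fixes h :: "real \<Rightarrow> real"
  assumes "h \<in> borel_measurable (lebesgue_on {0<..})" "\<not> (AE x in lebesgue_on {0<..}. h x = 0)"
  shows "0 < emeasure lebesgue {x \<in> {0<..}. h x \<noteq> 0}"
proof (rule ccontr)
  assume "\<not> ?thesis"
  then have "emeasure lebesgue {x \<in> {0<..}. h x \<noteq> 0} = 0" by (simp add: not_gr_zero)
  moreover have "{x \<in> space (lebesgue_on {0<..}). h x \<noteq> 0} \<in> sets (lebesgue_on {0<..})"
    using assms(1) by measurable
  then have "{x \<in> {0<..}. h x \<noteq> 0} \<in> sets lebesgue"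
    by (simp add: sets_restrict_space_iff)
  ultimately have "AE x in lebesgue. x \<in> {0<..} \<longrightarrow> h x = 0"
    by (intro AE_I[where N = "{x \<in> {0<..}. h x \<noteq> 0}"]) auto
  then show False
    using assms(2) by (subst (asm) AE_restrict_space_iff[symmetric]) auto
qed

locale interval_maps =
  fixes p :: real and v1 a b :: "real \<Rightarrow> real"
  assumes p_gt_1: "1 < p"
    and w_absolutely_integrable: "\<And>u u'. 0 < u \<Longrightarrow> wt p v1 absolutely_integrable_on {u..u'}"
    and a_mono: "strict_mono_on {0<..} a" and b_mono: "strict_mono_on {0<..} b"
    and a_cont: "continuous_on {0<..} a" and b_cont: "continuous_on {0<..} b"
    and a_tendsto_0: "(a \<longlongrightarrow> 0) (at_right 0)" and a_at_top: "filterlim a at_top at_top"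
    and a_lt_lt_b: "\<And>t. 0 < t \<Longrightarrow> a t < t \<and> t < b t"
    and V1_pos: "\<And>t. 0 < t \<Longrightarrow> 0 < V1 p v1 a b t"
begin

abbreviation "w \<equiv> wt p v1"
abbreviation "q \<equiv> conj_exp p"
abbreviation "V \<equiv> V1 p v1 a b"
abbreviation "A \<equiv> inv_into {0<..} a"

lemma q_pos: "0 < q"
  using p_gt_1 by (simp add: conj_exp_def)

lemma w_nonneg: "0 \<le> w x"
  by (simp add: wt_def)

lemma a_le_iff: "0 < x \<Longrightarrow> 0 < y \<Longrightarrow> a x \<le> a y \<longleftrightarrow> x \<le> y"
  using strict_mono_on_less_eq[OF a_mono] by simp

lemma b_le_iff: "0 < x \<Longrightarrow> 0 < y \<Longrightarrow> b x \<le> b y \<longleftrightarrow> x \<le> y"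
  using strict_mono_on_less_eq[OF b_mono] by simp

lemma a_pos: "0 < x \<Longrightarrow> 0 < a x"
proof -
  assume "0 < x"
  have "eventually (\<lambda>y. a y \<le> a (x/2)) (at_right 0)"
    unfolding eventually_at_right_field
    using \<open>0 < x\<close> by (intro exI[of _ "x/2"]) (auto simp: a_le_iff)
  then have "0 \<le> a (x/2)"
    by (rule tendsto_upperbound[OF a_tendsto_0]) simp
  also have "a (x/2) < a x"
    using \<open>0 < x\<close> strict_mono_on_less[OF a_mono] by simp
  finally show ?thesis .
qed

lemma A_pos_a_A_eq: "0 < t \<Longrightarrow> 0 < A t \<and> a (A t) = t"
proof -
  assume "0 < t"
  have "eventually (\<lambda>y. a y < t) (at_right 0)"
    using a_tendsto_0 \<open>0 < t\<close> by (rule order_tendstoD)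
  then obtain y where y: "0 < y" "a y < t"
    unfolding eventually_at_right_field by (metis field_lbound_gt_zero less_numeral_extra(1))
  have "eventually (\<lambda>z. t < a z) at_top"
    using a_at_top by (simp add: filterlim_at_top_dense)
  then obtain z where z: "y \<le> z" "t < a z"
    unfolding eventually_at_top_linorder by (metis max.cobounded1 max.cobounded2)
  have "continuous_on {y..z} a"
    using y(1) by (intro continuous_on_subset[OF a_cont]) auto
  then obtain x where "y \<le> x" "a x = t"
    using IVT'[of a y t z] y z by fastforce
  then have "t \<in> a ` {0<..}" using y(1) by force
  then show ?thesis
    using inv_into_into[of t a "{0<..}"] f_inv_into_f[of t a "{0<..}"] by auto
qed

lemma le_A_iff: "0 < t \<Longrightarrow> 0 < x \<Longrightarrow> x \<le> A t \<longleftrightarrow> a x \<le> t"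
  using A_pos_a_A_eq a_le_iff[of x "A t"] by auto

lemma w_integrable_on: "0 < u \<Longrightarrow> w integrable_on {u..u'}"
  using w_absolutely_integrable set_lebesgue_integral_eq_integral by blast

lemma set_integral_w: "0 < u \<Longrightarrow> (LINT x:{u..u'}|lebesgue. w x) = integral {u..u'} w"
  using w_absolutely_integrable set_lebesgue_integral_eq_integral by blast

lemma V_nonneg: "0 \<le> V t"
  unfolding V1_def set_lebesgue_integral_def by (simp add: w_nonneg)

end

locale window = interval_maps +
  fixes \<alpha>0 \<beta>0 :: real
  assumes \<alpha>0_pos: "0 < \<alpha>0" and \<alpha>0_le_\<beta>0: "\<alpha>0 \<le> \<beta>0"
begin

text \<open>\<open>s0\<close> and \<open>S\<close> are chosen so that \<open>[s0, S]\<close> contains \<open>[a t, b t]\<close> for every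
  \<open>t \<in> [a \<alpha>0, \<beta>0]\<close>, a range containing both the window and the set \<open>crit\<close> below.\<close>

definition "s0 = a (a \<alpha>0)"
definition "S = b \<beta>0"
definition "\<Omega> s = integral {s0..s} w"
definition "Wtot = \<Omega> S - \<Omega> s0"

lemma s0_pos: "0 < s0"
  unfolding s0_def using a_pos \<alpha>0_pos by auto

lemma s0_le: "s0 \<le> a \<alpha>0"
  unfolding s0_def using a_lt_lt_b[of "a \<alpha>0"] a_pos \<alpha>0_pos by auto

lemma s0_le_a: "\<alpha>0 \<le> x \<Longrightarrow> s0 \<le> a x"
  using s0_le a_le_iff[of \<alpha>0 x] \<alpha>0_pos by auto

lemma a_\<alpha>0_le: "a \<alpha>0 \<le> \<alpha>0"
  using a_lt_lt_b \<alpha>0_pos by (simp add: less_imp_le)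

lemma \<beta>0_le_S: "\<beta>0 \<le> S"
  unfolding S_def using a_lt_lt_b \<alpha>0_pos \<alpha>0_le_\<beta>0 by (simp add: less_imp_le)

lemma interval_in_range: "a \<alpha>0 \<le> t \<Longrightarrow> t \<le> \<beta>0 \<Longrightarrow> s0 \<le> a t \<and> a t \<le> t \<and> t \<le> b t \<and> b t \<le> S"
proof -
  assume t: "a \<alpha>0 \<le> t" "t \<le> \<beta>0"
  then have "0 < t" using a_pos \<alpha>0_pos by (meson less_le_trans)
  then show ?thesis
    using t a_pos \<alpha>0_pos a_le_iff b_le_iff a_lt_lt_b \<alpha>0_le_\<beta>0
    by (auto simp: s0_def S_def less_imp_le)
qed

lemma integral_w_eq_\<Omega>:
  assumes "s0 \<le> u" "u \<le> v"
  shows "integral {u..v} w = \<Omega> v - \<Omega> u"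
proof -
  have "integral {s0..u} w + integral {u..v} w = integral {s0..v} w"
    using assms s0_pos
    by (intro Henstock_Kurzweil_Integration.integral_combine w_integrable_on) auto
  then show ?thesis unfolding \<Omega>_def by simp
qed

lemma set_integral_w_eq_\<Omega>: "s0 \<le> u \<Longrightarrow> u \<le> v \<Longrightarrow> (LINT x:{u..v}|lebesgue. w x) = \<Omega> v - \<Omega> u"
  using set_integral_w integral_w_eq_\<Omega> s0_pos by simp

lemma \<Omega>_mono: "s0 \<le> u \<Longrightarrow> u \<le> v \<Longrightarrow> \<Omega> u \<le> \<Omega> v"
  using integral_w_eq_\<Omega>[of u v] integral_nonneg[OF w_integrable_on w_nonneg, of u v] s0_pos
  by simp

lemma \<Omega>_diff_bounds: "s0 \<le> u \<Longrightarrow> u \<le> v \<Longrightarrow> v \<le> S \<Longrightarrow> 0 \<le> \<Omega> v - \<Omega> u \<and> \<Omega> v - \<Omega> u \<le> Wtot"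
  using \<Omega>_mono[of u v] \<Omega>_mono[of s0 u] \<Omega>_mono[of v S] unfolding Wtot_def by auto

lemma \<Omega>_cont: "continuous_on {s0..S} \<Omega>"
  unfolding \<Omega>_def using w_integrable_on s0_pos by (intro indefinite_integral_continuous_1) auto

lemma V_eq: "a \<alpha>0 \<le> t \<Longrightarrow> t \<le> \<beta>0 \<Longrightarrow> V t = \<Omega> (b t) - \<Omega> (a t)"
  using interval_in_range set_integral_w_eq_\<Omega> unfolding V1_def by force

lemma V_le_Wtot: "a \<alpha>0 \<le> t \<Longrightarrow> t \<le> \<beta>0 \<Longrightarrow> V t \<le> Wtot"
  using interval_in_range V_eq \<Omega>_diff_bounds by fastforce

lemma Wtot_pos: "0 < Wtot"
  using V_le_Wtot[of \<alpha>0] V1_pos[OF \<alpha>0_pos] a_\<alpha>0_le \<alpha>0_le_\<beta>0 by simp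

lemma continuous_on_\<Omega>_comp:
  assumes "continuous_on {\<alpha>0..\<beta>0} f" "\<And>t. t \<in> {\<alpha>0..\<beta>0} \<Longrightarrow> f t \<in> {s0..S}"
  shows "continuous_on {\<alpha>0..\<beta>0} (\<lambda>t. \<Omega> (f t))"
  using assms by (intro continuous_on_compose2[OF \<Omega>_cont]) auto

lemma continuous_on_a: "continuous_on {\<alpha>0..\<beta>0} a" and continuous_on_b: "continuous_on {\<alpha>0..\<beta>0} b"
  using \<alpha>0_pos by (auto intro: continuous_on_subset[OF a_cont] continuous_on_subset[OF b_cont])

lemma window_in_range: "t \<in> {\<alpha>0..\<beta>0} \<Longrightarrow> a t \<in> {s0..S} \<and> b t \<in> {s0..S} \<and> t \<in> {s0..S}"
  using interval_in_range[of t] a_\<alpha>0_le by auto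

lemma V_cont: "continuous_on {\<alpha>0..\<beta>0} V"
proof -
  have "continuous_on {\<alpha>0..\<beta>0} (\<lambda>t. \<Omega> (b t) - \<Omega> (a t))"
    using window_in_range
    by (intro continuous_on_diff continuous_on_\<Omega>_comp continuous_on_a continuous_on_b) auto
  then show ?thesis
    by (rule continuous_on_eq) (use V_eq a_\<alpha>0_le in auto)
qed

lemma V_lower_bound: "\<exists>m>0. \<forall>t\<in>{\<alpha>0..\<beta>0}. m \<le> V t"
proof -
  obtain t0 where "t0 \<in> {\<alpha>0..\<beta>0}" "\<forall>t\<in>{\<alpha>0..\<beta>0}. V t0 \<le> V t"
    using continuous_attains_inf[OF compact_Icc _ V_cont] \<alpha>0_le_\<beta>0 by auto
  moreover have "0 < V t0" using \<open>t0 \<in> {\<alpha>0..\<beta>0}\<close> \<alpha>0_pos by (intro V1_pos) auto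
  ultimately show ?thesis by blast
qed

lemma set_integrable_\<Omega>_a: "set_integrable lebesgue {\<alpha>0..\<beta>0} (\<lambda>x. \<Omega> (a x))"
  using window_in_range
  by (intro absolutely_integrable_continuous_real continuous_on_\<Omega>_comp continuous_on_a) auto

text \<open>\<open>\<Psi> \<beta> - \<Psi> \<alpha>\<close> is the \<open>w\<close>-mass of \<open>[a \<alpha>, a \<beta>]\<close> plus that of \<open>[\<alpha>, \<beta>]\<close>; it controls the
  \<open>W\<close>-norm of the test function built on \<open>[\<alpha>, \<beta>]\<close>.\<close>

definition "\<Psi> t = \<Omega> (a t) + \<Omega> t"

lemma \<Psi>_cont: "continuous_on {\<alpha>0..\<beta>0} \<Psi>"
  unfolding \<Psi>_def using window_in_range
  by (intro continuous_on_add continuous_on_\<Omega>_comp continuous_on_a continuous_intros) auto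

lemma exists_short_subinterval:
  assumes F: "F \<in> sets lebesgue" "F \<subseteq> {\<alpha>0..\<beta>0}" "0 < emeasure lebesgue F" and "0 < \<epsilon>"
  obtains \<alpha> \<beta> where "\<alpha>0 \<le> \<alpha>" "\<alpha> \<le> \<beta>" "\<beta> \<le> \<beta>0" "\<Psi> \<beta> - \<Psi> \<alpha> < \<epsilon>"
    "0 < emeasure lebesgue (F \<inter> {\<alpha>..\<beta>})"
proof -
  have "uniformly_continuous_on {\<alpha>0..\<beta>0} \<Psi>"
    using \<Psi>_cont by (rule compact_uniformly_continuous) simp
  then obtain \<eta> where "0 < \<eta>"
    and \<eta>: "\<And>s t. s \<in> {\<alpha>0..\<beta>0} \<Longrightarrow> t \<in> {\<alpha>0..\<beta>0} \<Longrightarrow> dist t s < \<eta> \<Longrightarrow> dist (\<Psi> t) (\<Psi> s) < \<epsilon>"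
    unfolding uniformly_continuous_on_def using \<open>0 < \<epsilon>\<close> by metis
  obtain \<alpha> \<beta> where "\<alpha>0 \<le> \<alpha>" "\<alpha> \<le> \<beta>" "\<beta> \<le> \<beta>0" "\<beta> - \<alpha> < \<eta>"
      "0 < emeasure lebesgue (F \<inter> {\<alpha>..\<beta>})"
    using exists_short_subinterval_pos_measure[OF F \<open>0 < \<eta>\<close>] by blast
  moreover from this have "\<Psi> \<beta> - \<Psi> \<alpha> < \<epsilon>"
    using \<eta>[of \<alpha> \<beta>] by (auto simp: dist_real_def)
  ultimately show thesis by (intro that)
qed

end

locale test_function = window +
  fixes \<alpha> \<beta> :: real and H :: "real \<Rightarrow> real"
  assumes \<alpha>0_le_\<alpha>: "\<alpha>0 \<le> \<alpha>" and \<alpha>_le_\<beta>: "\<alpha> \<le> \<beta>" and \<beta>_le_\<beta>0: "\<beta> \<le> \<beta>0"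
    and H_integrable: "integrable lebesgue H"
    and H_\<Omega>_integrable: "integrable lebesgue (\<lambda>x. H x * \<Omega> (a x))"
    and H_support: "\<And>x. H x \<noteq> 0 \<Longrightarrow> x \<in> {\<alpha>..\<beta>}"
    and H_mean: "(LINT x|lebesgue. H x) = 0"
    and H_moment: "(LINT x|lebesgue. H x * \<Omega> (a x)) = 0"
begin

definition "g x = H x * V x"
definition "Hnorm = (LINT x|lebesgue. \<bar>H x\<bar>)"

text \<open>For \<open>t > 0\<close> outside \<open>crit\<close> the interval \<open>[t, A t]\<close> either misses \<open>[\<alpha>, \<beta>]\<close> or
  contains it together with all \<open>[a x, t]\<close>, \<open>x \<in> [\<alpha>, \<beta>]\<close>; either way the inner integrals of
  the \<open>W\<close>-norm of \<open>g\<close> vanish by the moment conditions on \<open>H\<close>.\<close>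

definition "crit = {a \<alpha>..a \<beta>} \<union> {\<alpha>..\<beta>}"

lemma \<alpha>_pos: "0 < \<alpha>"
  using \<alpha>0_le_\<alpha> \<alpha>0_pos by simp

lemma support_in_window: "H x \<noteq> 0 \<Longrightarrow> 0 < x \<and> \<alpha>0 \<le> x \<and> x \<le> \<beta>0"
  using H_support \<alpha>_pos \<alpha>0_le_\<alpha> \<beta>_le_\<beta>0 by force

lemma g_div_V: "g x / V x = H x"
  using support_in_window[of x] V1_pos[of x] by (cases "H x = 0") (auto simp: g_def)

lemma Hnorm_nonneg: "0 \<le> Hnorm"
  unfolding Hnorm_def by simp

lemma crit_in_window: "t \<in> crit \<Longrightarrow> a \<alpha>0 \<le> t \<and> t \<le> \<beta>0"
proof -
  assume "t \<in> crit"
  moreover have "a \<alpha>0 \<le> a \<alpha>" using a_le_iff \<alpha>0_le_\<alpha> \<alpha>0_pos \<alpha>_pos by auto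
  moreover have "a \<beta> \<le> \<beta>" "a \<alpha> \<le> \<alpha>" using a_lt_lt_b[of \<beta>] a_lt_lt_b[of \<alpha>] \<alpha>_pos \<alpha>_le_\<beta> by auto
  ultimately show ?thesis using \<alpha>_le_\<beta> \<beta>_le_\<beta>0 by (auto simp: crit_def)
qed

lemma crit_pos: "t \<in> crit \<Longrightarrow> 0 < t"
  using crit_in_window a_pos \<alpha>0_pos by (meson less_le_trans)

lemma outside_crit:
  assumes "0 < t" "t \<notin> crit"
  shows "{\<alpha>..\<beta>} \<inter> {t..A t} = {} \<or> (t < \<alpha> \<and> (\<forall>x\<in>{\<alpha>..\<beta>}. a x \<le> t \<and> x \<in> {t..A t}))"
proof -
  consider "t < a \<alpha>" | "\<beta> < t" | "a \<beta> < t \<and> t < \<alpha>"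
    using assms(2) by (auto simp: crit_def not_le)
  then show ?thesis
  proof cases
    case 1
    then have "\<not> x \<le> A t" if "\<alpha> \<le> x" for x
      using that assms(1) \<alpha>_pos le_A_iff[of t x] a_le_iff[of \<alpha> x] by auto
    then show ?thesis by auto
  next
    case 3
    then have "a x \<le> t" if "x \<in> {\<alpha>..\<beta>}" for x
      using that \<alpha>_pos a_le_iff[of x \<beta>] by auto
    then show ?thesis
      using 3 assms(1) \<alpha>_pos le_A_iff by fastforce
  qed auto
qed

lemma inner_integral_eq:
  "(LINT x:{t..A t}|lebesgue. g x / V x * k x)
    = (LINT x|lebesgue. indicator {t..A t} x * (H x * k x))"
  unfolding set_lebesgue_integral_def by (simp add: g_div_V)

lemma inner_integral_eq_0:
  assumes "0 < t" "t \<notin> crit" "\<And>x. x \<in> {\<alpha>..\<beta>} \<Longrightarrow> a x \<le> t \<Longrightarrow> k x = c + d * \<Omega> (a x)"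
  shows "(LINT x:{t..A t}|lebesgue. g x / V x * k x) = 0"
  using outside_crit[OF assms(1,2)]
proof
  assume disjoint: "{\<alpha>..\<beta>} \<inter> {t..A t} = {}"
  have "indicator {t..A t} x * (H x * k x) = 0" for x
  proof (cases "H x = 0")
    case False
    then have "x \<notin> {t..A t}" using H_support disjoint by blast
    then show ?thesis by simp
  qed simp
  then have "(\<lambda>x. indicator {t..A t} x * (H x * k x)) = (\<lambda>x. 0)" by (rule ext)
  then show ?thesis unfolding inner_integral_eq by simp
next
  assume inside: "t < \<alpha> \<and> (\<forall>x\<in>{\<alpha>..\<beta>}. a x \<le> t \<and> x \<in> {t..A t})"
  have "indicator {t..A t} x * (H x * k x) = c * H x + d * (H x * \<Omega> (a x))" for x
  proof (cases "H x = 0")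
    case False
    then have "x \<in> {\<alpha>..\<beta>}" by (rule H_support)
    then have "indicator {t..A t} x = (1::real)" "k x = c + d * \<Omega> (a x)"
      using inside assms(3) by auto
    then show ?thesis by (simp add: algebra_simps)
  qed simp
  then show ?thesis
    unfolding inner_integral_eq using H_integrable H_\<Omega>_integrable H_mean H_moment by simp
qed

lemma inner_integral_bound:
  assumes "0 < t" "0 \<le> K" "\<And>x. x \<in> {\<alpha>..\<beta>} \<Longrightarrow> a x \<le> t \<Longrightarrow> \<bar>k x\<bar> \<le> K"
  shows "\<bar>LINT x:{t..A t}|lebesgue. g x / V x * k x\<bar> \<le> K * Hnorm"
proof -
  have "\<bar>indicator {t..A t} x * (H x * k x)\<bar> \<le> K * \<bar>H x\<bar>" for x
  proof (cases "H x = 0 \<or> x \<notin> {t..A t}")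
    case False
    then have "x \<in> {\<alpha>..\<beta>}" "a x \<le> t"
      using H_support support_in_window le_A_iff[OF assms(1), of x] by auto
    then show ?thesis using False assms(3)[of x] by (simp add: abs_mult mult_right_mono)
  qed (auto simp: assms(2))
  then have "(LINT x|lebesgue. \<bar>indicator {t..A t} x * (H x * k x)\<bar>) \<le> (LINT x|lebesgue. K * \<bar>H x\<bar>)"
    using H_integrable assms(2) by (intro integral_mono') auto
  then show ?thesis
    unfolding inner_integral_eq Hnorm_def
    by (intro order.trans[OF integral_abs_bound]) simp
qed

lemma \<Psi>_diff_nonneg: "0 \<le> \<Psi> \<beta> - \<Psi> \<alpha>"
  unfolding \<Psi>_def using \<Omega>_mono[of "a \<alpha>" "a \<beta>"] \<Omega>_mono[of \<alpha> \<beta>] s0_le_a \<alpha>0_le_\<alpha> \<alpha>_le_\<beta>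
    s0_le a_\<alpha>0_le a_le_iff[of \<alpha> \<beta>] \<alpha>_pos
  by fastforce

lemma nn_integral_crit_le:
  assumes "0 \<le> C" "\<And>t. 0 < t \<Longrightarrow> 0 \<le> F t \<and> F t \<le> C * (indicator crit t * w t)"
  shows "(\<integral>\<^sup>+ t\<in>{0<..}. ennreal (F t) \<partial>lebesgue) \<le> ennreal (C * (\<Psi> \<beta> - \<Psi> \<alpha>))"
proof -
  define G where "G t = C * (indicator {a \<alpha>..a \<beta>} t * w t + indicator {\<alpha>..\<beta>} t * w t)" for t
  have a\<alpha>: "0 < a \<alpha>" "s0 \<le> a \<alpha>" "a \<alpha> \<le> a \<beta>"
    using a_pos \<alpha>_pos s0_le_a \<alpha>0_le_\<alpha> a_le_iff[of \<alpha> \<beta>] \<alpha>_le_\<beta> by auto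
  have s0\<alpha>: "s0 \<le> \<alpha>" using s0_le a_\<alpha>0_le \<alpha>0_le_\<alpha> by linarith
  have int: "integrable lebesgue (\<lambda>t. indicator {u..u'} t * w t)" if "0 < u" for u u'
    using w_absolutely_integrable[OF that, of u'] unfolding set_integrable_def by simp
  have lint: "(LINT t|lebesgue. indicator {u..u'} t * w t) = integral {u..u'} w" if "0 < u" for u u'
    using set_lebesgue_integral_eq_integral(2)[OF w_absolutely_integrable[OF that, of u']]
    unfolding set_lebesgue_integral_def by simp
  have "(\<integral>\<^sup>+ t\<in>{0<..}. ennreal (F t) \<partial>lebesgue) \<le> (\<integral>\<^sup>+ t. ennreal (G t) \<partial>lebesgue)"
  proof (rule nn_integral_mono)
    fix t
    show "ennreal (F t) * indicator {0<..} t \<le> ennreal (G t)"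
    proof (cases "0 < t")
      case True
      have "indicator crit t * w t \<le> indicator {a \<alpha>..a \<beta>} t * w t + indicator {\<alpha>..\<beta>} t * w t"
        using w_nonneg[of t] by (auto simp: crit_def indicator_def)
      then have "C * (indicator crit t * w t) \<le> G t"
        unfolding G_def using assms(1) by (rule mult_left_mono)
      then show ?thesis
        using True assms(2)[of t] by (auto intro!: ennreal_leI)
    qed simp
  qed
  also have "\<dots> = ennreal (LINT t|lebesgue. G t)"
    unfolding G_def using int a\<alpha>(1) \<alpha>_pos assms(1) w_nonneg
    by (intro nn_integral_eq_integral) auto
  also have "(LINT t|lebesgue. G t) = C * (\<Psi> \<beta> - \<Psi> \<alpha>)"
    unfolding G_def \<Psi>_def using int lint a\<alpha> \<alpha>_pos s0\<alpha> \<alpha>_le_\<beta>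
    by (simp add: integral_w_eq_\<Omega> algebra_simps)
  finally show ?thesis .
qed

lemma epow_integral_le:
  assumes "0 \<le> M" "\<And>t. 0 < t \<Longrightarrow> t \<notin> crit \<Longrightarrow> X t = 0" "\<And>t. t \<in> crit \<Longrightarrow> \<bar>X t\<bar> \<le> M"
  shows "epow (\<integral>\<^sup>+ t\<in>{0<..}. ennreal (w t * \<bar>X t\<bar> powr q) \<partial>lebesgue) (1 / q)
    \<le> ennreal (M * (\<Psi> \<beta> - \<Psi> \<alpha>) powr (1 / q))"
proof -
  have "(\<integral>\<^sup>+ t\<in>{0<..}. ennreal (w t * \<bar>X t\<bar> powr q) \<partial>lebesgue)
      \<le> ennreal (M powr q * (\<Psi> \<beta> - \<Psi> \<alpha>))"
  proof (rule nn_integral_crit_le)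
    fix t :: real assume "0 < t"
    show "0 \<le> w t * \<bar>X t\<bar> powr q \<and> w t * \<bar>X t\<bar> powr q \<le> M powr q * (indicator crit t * w t)"
    proof (cases "t \<in> crit")
      case True
      then have "\<bar>X t\<bar> powr q \<le> M powr q" using assms(3) q_pos by (intro powr_mono2) auto
      then show ?thesis using True w_nonneg[of t] by (simp add: mult.commute mult_left_mono)
    qed (simp add: assms(2)[OF \<open>0 < t\<close>] w_nonneg)
  qed simp
  then have "epow (\<integral>\<^sup>+ t\<in>{0<..}. ennreal (w t * \<bar>X t\<bar> powr q) \<partial>lebesgue) (1 / q)
      \<le> ennreal ((M powr q * (\<Psi> \<beta> - \<Psi> \<alpha>)) powr (1 / q))"
    using \<Psi>_diff_nonneg q_pos by (intro epow_le_ennreal_powr) auto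
  also have "(M powr q * (\<Psi> \<beta> - \<Psi> \<alpha>)) powr (1 / q) = M * (\<Psi> \<beta> - \<Psi> \<alpha>) powr (1 / q)"
    using assms(1) \<Psi>_diff_nonneg q_pos by (simp add: powr_mult powr_powr)
  finally show ?thesis .
qed

lemma GG_le: "GG p v1 a b g \<le> ennreal (Wtot * Hnorm * (\<Psi> \<beta> - \<Psi> \<alpha>) powr (1 / q))"
  unfolding GG_def
proof (rule epow_integral_le)
  show "0 \<le> Wtot * Hnorm" using Wtot_pos Hnorm_nonneg by simp
  fix t :: real
  show "(LINT x:{t..A t}|lebesgue. g x / V x * (LINT y:{a x..t}|lebesgue. w y)) = 0"
    if "0 < t" "t \<notin> crit"
    using that s0_le_a \<alpha>0_le_\<alpha>
    by (intro inner_integral_eq_0[where c = "\<Omega> t" and d = "-1"]) (auto simp: set_integral_w_eq_\<Omega>)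
  show "\<bar>LINT x:{t..A t}|lebesgue. g x / V x * (LINT y:{a x..t}|lebesgue. w y)\<bar> \<le> Wtot * Hnorm"
    if "t \<in> crit"
  proof (rule inner_integral_bound)
    show "0 < t" "0 \<le> Wtot" using crit_pos[OF that] Wtot_pos by auto
    fix x assume "x \<in> {\<alpha>..\<beta>}" "a x \<le> t"
    moreover have "t \<le> S" using crit_in_window[OF that] \<beta>0_le_S by simp
    ultimately show "\<bar>LINT y:{a x..t}|lebesgue. w y\<bar> \<le> Wtot"
      using s0_le_a[of x] \<alpha>0_le_\<alpha> \<Omega>_diff_bounds[of "a x" t] set_integral_w_eq_\<Omega>[of "a x" t] by auto
  qed
qed

lemma CG_le: "CG p v1 a b g \<le> ennreal (Wtot * Hnorm * (\<Psi> \<beta> - \<Psi> \<alpha>) powr (1 / q))"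
proof -
  have "w t * V t powr q * \<bar>LINT x:{t..A t}|lebesgue. g x / V x\<bar> powr q
      = w t * \<bar>V t * (LINT x:{t..A t}|lebesgue. g x / V x * 1)\<bar> powr q" for t
    using V_nonneg[of t] by (simp add: abs_mult powr_mult)
  then show ?thesis
    unfolding CG_def
  proof (simp only:, intro epow_integral_le)
    show "0 \<le> Wtot * Hnorm" using Wtot_pos Hnorm_nonneg by simp
    fix t :: real
    show "V t * (LINT x:{t..A t}|lebesgue. g x / V x * 1) = 0" if "0 < t" "t \<notin> crit"
      using inner_integral_eq_0[of t "\<lambda>_. 1" 1 0] that by simp
    show "\<bar>V t * (LINT x:{t..A t}|lebesgue. g x / V x * 1)\<bar> \<le> Wtot * Hnorm" if "t \<in> crit"
    proof -
      have "\<bar>LINT x:{t..A t}|lebesgue. g x / V x * 1\<bar> \<le> 1 * Hnorm"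
        using crit_pos[OF that] by (intro inner_integral_bound) auto
      moreover have "0 \<le> V t" "V t \<le> Wtot" using V_nonneg V_le_Wtot crit_in_window[OF that] by auto
      ultimately show ?thesis using Hnorm_nonneg by (simp add: abs_mult mult_mono)
    qed
  qed
qed

lemma Wnorm_le: "Wnorm p v1 a b g \<le> ennreal (2 * Wtot * Hnorm * (\<Psi> \<beta> - \<Psi> \<alpha>) powr (1 / q))"
proof -
  have "Wnorm p v1 a b g \<le> ennreal (Wtot * Hnorm * (\<Psi> \<beta> - \<Psi> \<alpha>) powr (1 / q))
      + ennreal (Wtot * Hnorm * (\<Psi> \<beta> - \<Psi> \<alpha>) powr (1 / q))"
    unfolding Wnorm_def using GG_le CG_le by (rule add_mono)
  also have "\<dots> = ennreal (2 * Wtot * Hnorm * (\<Psi> \<beta> - \<Psi> \<alpha>) powr (1 / q))"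
    using Wtot_pos Hnorm_nonneg by (simp add: ennreal_plus[symmetric] del: ennreal_plus)
  finally show ?thesis .
qed

lemma Wnorm_le_if_short:
  assumes "\<Psi> \<beta> - \<Psi> \<alpha> < K powr q" "0 < K"
  shows "Wnorm p v1 a b g \<le> ennreal (2 * Wtot * Hnorm * K)"
proof -
  have "(\<Psi> \<beta> - \<Psi> \<alpha>) powr (1 / q) \<le> (K powr q) powr (1 / q)"
    using assms(1) \<Psi>_diff_nonneg q_pos by (intro powr_mono2) auto
  then have "(\<Psi> \<beta> - \<Psi> \<alpha>) powr (1 / q) \<le> K"
    using assms(2) q_pos by (simp add: powr_powr)
  then have "2 * Wtot * Hnorm * (\<Psi> \<beta> - \<Psi> \<alpha>) powr (1 / q) \<le> 2 * Wtot * Hnorm * K"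
    using Wtot_pos Hnorm_nonneg by (intro mult_left_mono) auto
  then show ?thesis
    using Wnorm_le by (meson ennreal_leI order.trans)
qed

lemma Hnorm_pos:
  assumes "\<not> (AE x in lebesgue. H x = 0)"
  shows "0 < Hnorm"
proof -
  have "Hnorm = 0 \<longleftrightarrow> (AE x in lebesgue. \<bar>H x\<bar> = 0)"
    unfolding Hnorm_def using H_integrable by (intro integral_nonneg_eq_0_iff_AE) auto
  then show ?thesis using assms Hnorm_nonneg by auto
qed

lemma abs_g_le: "\<bar>g x\<bar> \<le> Wtot * \<bar>H x\<bar>"
proof (cases "H x = 0")
  case False
  then have "0 \<le> V x" "V x \<le> Wtot"
    using V_nonneg support_in_window[OF False] a_\<alpha>0_le by (auto intro: V_le_Wtot)
  then have "\<bar>H x\<bar> * V x \<le> \<bar>H x\<bar> * Wtot" by (intro mult_left_mono) auto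
  then show ?thesis using V_nonneg[of x] by (simp add: g_def abs_mult mult.commute)
qed (simp add: g_def)

lemma g_measurable: "g \<in> borel_measurable lebesgue"
proof -
  have "(\<lambda>x. indicator {\<alpha>0..\<beta>0} x *\<^sub>R V x) \<in> borel_measurable borel"
    using V_cont by (intro borel_measurable_continuous_on_indicator) auto
  then have "(\<lambda>x. indicator {\<alpha>0..\<beta>0} x * V x) \<in> borel_measurable lebesgue"
    by (simp add: measurable_completion)
  moreover have "g = (\<lambda>x. H x * (indicator {\<alpha>0..\<beta>0} x * V x))"
    using support_in_window by (force simp: g_def indicator_def)
  ultimately show ?thesis
    using borel_measurable_integrable[OF H_integrable] by simp
qed

lemma g_Lloc: "Lloc 1 g"
  unfolding Lloc_def
proof (intro conjI allI impI)
  show "g \<in> borel_measurable (lebesgue_on {0<..})"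
    using g_measurable by (rule measurable_restrict_space1)
  fix u u' :: real
  have "(\<integral>\<^sup>+ x\<in>{u..u'}. ennreal (\<bar>g x\<bar> powr 1) \<partial>lebesgue)
      \<le> (\<integral>\<^sup>+ x. ennreal (Wtot * \<bar>H x\<bar>) \<partial>lebesgue)"
  proof (rule nn_integral_mono)
    fix x
    show "ennreal (\<bar>g x\<bar> powr 1) * indicator {u..u'} x \<le> ennreal (Wtot * \<bar>H x\<bar>)"
      using abs_g_le[of x] by (auto simp: indicator_def)
  qed
  also have "\<dots> = ennreal (LINT x|lebesgue. Wtot * \<bar>H x\<bar>)"
    using H_integrable Wtot_pos by (intro nn_integral_eq_integral) auto
  also have "\<dots> < \<infinity>" by simp
  finally show "(\<integral>\<^sup>+ x\<in>{u..u'}. ennreal (\<bar>g x\<bar> powr 1) \<partial>lebesgue) < \<infinity>" .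
qed

lemma g_not_AE_zero:
  assumes "\<not> (AE x in lebesgue. H x = 0)"
  shows "\<not> (AE x in lebesgue_on {0<..}. g x = 0)"
proof
  assume "AE x in lebesgue_on {0<..}. g x = 0"
  then have "AE x in lebesgue. x \<in> {0<..} \<longrightarrow> g x = 0"
    by (subst (asm) AE_restrict_space_iff) auto
  then have "AE x in lebesgue. H x = 0"
  proof (rule AE_mp, intro AE_I2 impI)
    fix x assume g0: "x \<in> {0<..} \<longrightarrow> g x = 0"
    show "H x = 0"
    proof (rule ccontr)
      assume "H x \<noteq> 0"
      then have "0 < x" using support_in_window by auto
      then have "g x \<noteq> 0" using \<open>H x \<noteq> 0\<close> V1_pos[of x] by (simp add: g_def)
      then show False using g0 \<open>0 < x\<close> by simp
    qed
  qed
  then show False using assms by simp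
qed

lemma nn_integral_fg_ge:
  assumes "0 \<le> \<delta>" "\<And>x. H x \<noteq> 0 \<Longrightarrow> \<delta> \<le> \<bar>f x\<bar>"
    and "0 \<le> m" "\<And>t. t \<in> {\<alpha>0..\<beta>0} \<Longrightarrow> m \<le> V t"
  shows "ennreal (\<delta> * m * Hnorm) \<le> (\<integral>\<^sup>+ x\<in>{0<..}. ennreal \<bar>f x * g x\<bar> \<partial>lebesgue)"
proof -
  have "ennreal (\<delta> * m * Hnorm) = (\<integral>\<^sup>+ x. ennreal (\<delta> * m * \<bar>H x\<bar>) \<partial>lebesgue)"
    unfolding Hnorm_def using H_integrable assms(1,3)
    by (subst nn_integral_eq_integral) auto
  also have "\<dots> \<le> (\<integral>\<^sup>+ x\<in>{0<..}. ennreal \<bar>f x * g x\<bar> \<partial>lebesgue)"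
  proof (rule nn_integral_mono)
    fix x
    show "ennreal (\<delta> * m * \<bar>H x\<bar>) \<le> ennreal \<bar>f x * g x\<bar> * indicator {0<..} x"
    proof (cases "H x = 0")
      case False
      then have "\<delta> * m \<le> \<bar>f x\<bar> * V x"
        using assms support_in_window[OF False] by (intro mult_mono) auto
      then have "\<delta> * m * \<bar>H x\<bar> \<le> \<bar>f x\<bar> * V x * \<bar>H x\<bar>" by (rule mult_right_mono) simp
      also have "\<dots> = \<bar>f x * g x\<bar>" using V_nonneg[of x] by (simp add: g_def abs_mult mult_ac)
      finally have "\<delta> * m * \<bar>H x\<bar> \<le> \<bar>f x * g x\<bar>" .
      then show ?thesis
        using support_in_window[OF False] by (simp add: ennreal_leI)
    qed simp
  qed
  finally show ?thesis .
qed

end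

context window
begin

lemma exists_test_function:
  assumes F: "F \<in> sets lebesgue" "F \<subseteq> {\<alpha>0..\<beta>0}" "0 < emeasure lebesgue F" and "0 < \<epsilon>"
  obtains \<alpha> \<beta> H where "test_function p v1 a b \<alpha>0 \<beta>0 \<alpha> \<beta> H" "\<Psi> \<beta> - \<Psi> \<alpha> < \<epsilon>"
    "\<not> (AE x in lebesgue. H x = 0)" "\<And>x. H x \<noteq> 0 \<Longrightarrow> x \<in> F"
proof -
  obtain \<alpha> \<beta> where \<alpha>\<beta>: "\<alpha>0 \<le> \<alpha>" "\<alpha> \<le> \<beta>" "\<beta> \<le> \<beta>0" "\<Psi> \<beta> - \<Psi> \<alpha> < \<epsilon>"
    and pos: "0 < emeasure lebesgue (F \<inter> {\<alpha>..\<beta>})"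
    using exists_short_subinterval[OF F \<open>0 < \<epsilon>\<close>] by blast
  have E: "F \<inter> {\<alpha>..\<beta>} \<in> sets lebesgue" "F \<inter> {\<alpha>..\<beta>} \<subseteq> {\<alpha>..\<beta>}"
    using F(1) by auto
  have "set_integrable lebesgue (F \<inter> {\<alpha>..\<beta>}) (\<lambda>x. \<Omega> (a x))"
    using F(1,2) by (intro set_integrable_subset[OF set_integrable_\<Omega>_a]) auto
  with E pos obtain H where "integrable lebesgue H" "integrable lebesgue (\<lambda>x. H x * \<Omega> (a x))"
    "\<And>x. H x \<noteq> 0 \<Longrightarrow> x \<in> F \<inter> {\<alpha>..\<beta>}" "\<not> (AE x in lebesgue. H x = 0)"
    "(LINT x|lebesgue. H x) = 0" "(LINT x|lebesgue. H x * \<Omega> (a x)) = 0"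
    by (rule exists_annihilating_step_function) blast
  moreover from this have "test_function p v1 a b \<alpha>0 \<beta>0 \<alpha> \<beta> H"
    using \<alpha>\<beta> by (intro test_function.intro window.intro interval_maps_axioms window_axioms
        test_function_axioms.intro) auto
  ultimately show thesis
    using \<alpha>\<beta>(4) by (intro that[of \<alpha> \<beta> H]) auto
qed

lemma JW_eq_top:
  assumes F: "F \<in> sets lebesgue" "F \<subseteq> {\<alpha>0..\<beta>0}" "0 < emeasure lebesgue F"
    and f: "0 < \<delta>" "\<And>x. x \<in> F \<Longrightarrow> \<delta> \<le> \<bar>f x\<bar>"
  shows "JW p v1 a b f = \<infinity>"
  unfolding JW_def infinity_ennreal_def
proof (rule ennreal_SUP_eq_top)
  fix n :: nat
  obtain m where m: "0 < m" "\<And>t. t \<in> {\<alpha>0..\<beta>0} \<Longrightarrow> m \<le> V t"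
    using V_lower_bound by blast
  define K where "K = \<delta> * m / (2 * Wtot * (n + 1))"
  have K: "0 < K" using f(1) m(1) Wtot_pos by (simp add: K_def)
  obtain \<alpha> \<beta> H where TF: "test_function p v1 a b \<alpha>0 \<beta>0 \<alpha> \<beta> H" and \<Psi>: "\<Psi> \<beta> - \<Psi> \<alpha> < K powr q"
    and H: "\<not> (AE x in lebesgue. H x = 0)" "\<And>x. H x \<noteq> 0 \<Longrightarrow> x \<in> F"
    using exists_test_function[OF F, of "K powr q"] K by auto
  interpret T: test_function p v1 a b \<alpha>0 \<beta>0 \<alpha> \<beta> H by (rule TF)
  have Hnorm: "0 < T.Hnorm" using T.Hnorm_pos[OF H(1)] .
  have Wn: "Wnorm p v1 a b T.g \<le> ennreal (2 * Wtot * T.Hnorm * K)"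
    using T.Wnorm_le_if_short[OF \<Psi> K] .
  have "ennreal (\<delta> * m * T.Hnorm) \<le> (\<integral>\<^sup>+ x\<in>{0<..}. ennreal \<bar>f x * T.g x\<bar> \<partial>lebesgue)"
    using f H(2) m by (intro T.nn_integral_fg_ge) auto
  then have "ennreal (\<delta> * m * T.Hnorm / (2 * Wtot * T.Hnorm * K))
      \<le> (\<integral>\<^sup>+ x\<in>{0<..}. ennreal \<bar>f x * T.g x\<bar> \<partial>lebesgue) / Wnorm p v1 a b T.g"
    using Wn f(1) m(1) Hnorm Wtot_pos K by (intro ennreal_le_divide) auto
  also have "\<delta> * m * T.Hnorm / (2 * Wtot * T.Hnorm * K) = n + 1"
    using Hnorm Wtot_pos f(1) m(1) by (simp add: K_def field_simps)
  finally have ratio: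
    "ennreal (n + 1) \<le> (\<integral>\<^sup>+ x\<in>{0<..}. ennreal \<bar>f x * T.g x\<bar> \<partial>lebesgue) / Wnorm p v1 a b T.g" .
  show "\<exists>g\<in>{g \<in> Wspace p v1 a b. \<not> (AE x in lebesgue_on {0<..}. g x = 0)}.
      of_nat n \<le> (\<integral>\<^sup>+ x\<in>{0<..}. ennreal \<bar>f x * g x\<bar> \<partial>lebesgue) / Wnorm p v1 a b g"
  proof (rule bexI[of _ T.g])
    show "of_nat n \<le> (\<integral>\<^sup>+ x\<in>{0<..}. ennreal \<bar>f x * T.g x\<bar> \<partial>lebesgue) / Wnorm p v1 a b T.g"
      by (rule order.trans[OF _ ratio]) (simp add: ennreal_of_nat_eq_real_of_nat)
    have "Wnorm p v1 a b T.g < \<infinity>" using Wn by (simp add: le_less_trans[OF _ ennreal_less_top])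
    then show "T.g \<in> {g \<in> Wspace p v1 a b. \<not> (AE x in lebesgue_on {0<..}. g x = 0)}"
      unfolding Wspace_def using T.g_Lloc T.g_not_AE_zero[OF H(1)] by simp
  qed
qed

end

context interval_maps
begin

lemma JW_eq_top_if_nonzero:
  assumes f: "f \<in> borel_measurable (lebesgue_on {0<..})"
    and "0 < emeasure lebesgue {x \<in> {0<..}. f x \<noteq> 0}"
  shows "JW p v1 a b f = \<infinity>"
proof -
  obtain \<alpha>0 \<beta>0 \<delta> where "0 < \<alpha>0" "0 < \<delta>" and F: "0 < emeasure lebesgue {x\<in>{\<alpha>0..\<beta>0}. \<delta> \<le> \<bar>f x\<bar>}"
    using exists_level_set_pos_measure[OF assms] by blast
  then have "{x\<in>{\<alpha>0..\<beta>0}. \<delta> \<le> \<bar>f x\<bar>} \<noteq> {}" by (metis emeasure_empty order_less_irrefl)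
  then have "\<alpha>0 \<le> \<beta>0" by auto
  with \<open>0 < \<alpha>0\<close> interpret window p v1 a b \<alpha>0 \<beta>0
    by unfold_locales
  show ?thesis
    using level_set_in_sets_lebesgue[OF f \<open>0 < \<alpha>0\<close>] F \<open>0 < \<delta>\<close>
    by (intro JW_eq_top[of "{x\<in>{\<alpha>0..\<beta>0}. \<delta> \<le> \<bar>f x\<bar>}" \<delta>]) auto
qed

lemma strong_assoc_eq:
  "strong_assoc p v1 a b =
    {h \<in> borel_measurable (lebesgue_on {0<..}). AE x in lebesgue_on {0<..}. h x = 0}"
proof -
  have "JW p v1 a b h < \<infinity> \<longleftrightarrow> (AE x in lebesgue_on {0<..}. h x = 0)"
    if "h \<in> borel_measurable (lebesgue_on {0<..})" for h
    using JW_eq_0_if_AE_zero[of h]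
      JW_eq_top_if_nonzero[OF that emeasure_nonzero_pos_if_not_AE_zero[OF that]]
    by (cases "AE x in lebesgue_on {0<..}. h x = 0") auto
  then show ?thesis unfolding strong_assoc_def by auto
qed

end

theorem corollary2p9:
  fixes p :: real and v0 v1 a b f :: "real \<Rightarrow> real" and c :: real
  assumes p: "1 < p"
    and v0: "weight_class p v0" and v1: "weight_class p v1"
    and v1_pos: "AE x in lebesgue_on {0<..}. 0 < v1 x"
    and inv_v1: "Lloc (conj_exp p) (\<lambda>x. 1 / v1 x)"
    and c: "0 < c"
    and c0: "Lnorm (conj_exp p) {0<..<c} (\<lambda>x. 1 / v1 x) * Lnorm p {0<..<c} v0 = \<infinity>"
    and c1: "Lnorm (conj_exp p) {c<..} (\<lambda>x. 1 / v1 x) * Lnorm p {c<..} v0 = \<infinity>"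
    and a_mono: "strict_mono_on {0<..} a" and b_mono: "strict_mono_on {0<..} b"
    and a_ac: "loc_abs_cont_pos a" and b_ac: "loc_abs_cont_pos b"
    and a0: "(a \<longlongrightarrow> 0) (at_right 0)" and b0: "(b \<longlongrightarrow> 0) (at_right 0)"
    and ainf: "filterlim a at_top at_top" and binf: "filterlim b at_top at_top"
    and ab: "\<And>t. 0 < t \<Longrightarrow> a t < t \<and> t < b t"
    and bal: "\<And>t. 0 < t \<Longrightarrow>
       (LINT x:{a t..t}|lebesgue. wt p v1 x) = (LINT x:{t..b t}|lebesgue. wt p v1 x)"
    and norm1: "\<And>t. 0 < t \<Longrightarrow>
       (LINT x:{a t..b t}|lebesgue. wt p v1 x) powr (1 / conj_exp p) *
       (LINT x:{a t..b t}|lebesgue. v0 x powr p) powr (1 / p) = 1"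
    and f_meas: "f \<in> borel_measurable (lebesgue_on {0<..})"
    and f_nz: "emeasure lebesgue {x \<in> {0<..}. f x \<noteq> 0} > 0"
  shows "JW p v1 a b f = \<infinity> \<and>
    strong_assoc p v1 a b =
      {h \<in> borel_measurable (lebesgue_on {0<..}). AE x in lebesgue_on {0<..}. h x = 0}"
proof -
  \<comment> \<open>Only the local integrability of \<open>wt p v1\<close>, the properties of \<open>a\<close> and \<open>b\<close> on
    \<open>(0, \<infinity>)\<close> and \<open>V1 > 0\<close> (a consequence of \<open>norm1\<close>) are used.\<close>
  have "wt p v1 absolutely_integrable_on {u..u'}" if "0 < u" for u u'
    using Lloc_powr_absolutely_integrable_on[OF inv_v1 _ that] v1
    unfolding wt_def[abs_def] weight_class_def by simp
  moreover have "0 < V1 p v1 a b t" if "0 < t" for t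
  proof -
    have "V1 p v1 a b t \<noteq> 0" using norm1[OF that] by (auto simp: V1_def)
    moreover have "0 \<le> V1 p v1 a b t"
      unfolding V1_def set_lebesgue_integral_def by (simp add: wt_def)
    ultimately show ?thesis by simp
  qed
  ultimately interpret interval_maps p v1 a b
    using p a_mono b_mono a0 ainf ab
      continuous_on_loc_abs_cont_pos[OF a_ac] continuous_on_loc_abs_cont_pos[OF b_ac]
    by unfold_locales auto
  show ?thesis
    using JW_eq_top_if_nonzero[OF f_meas f_nz] strong_assoc_eq by simp
qed

end
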